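(* Let $\Psi(x)=I_1(x)/I_0(x)$ for $x>0$ and define $$\lambda(x)=\frac{\log\left(1-\frac{2}{x}\Psi(x)\right)}{\log\Psi(x)},\qquad x>0.$$ Then $2<\lambda(x)<4$ for all $x>0$, and $$\lim_{x\to0^+}\lambda(x)=2,\qquad \lim_{x\to\infty}\lambda(x)=4.$$ Consequently the constants $2$ and $4$ are the best possible, i.e. in the inequality $\sqrt{1-\frac1K}<r<\sqrt[4]{1-\frac1K}$, valid for $K>1$ and $r>0$ solving $r=\Psi(2Kr)$, the exponents $\frac12$ and $\frac14$ cannot be improved.
   Context: $I_\nu$ denotes the modified Bessel function of the first kind of order $\nu$. *)

theory Defs
  imports "HOL-Analysis.Analysis"
begin

definition besselI :: "real \<Rightarrow> real \<Rightarrow> real" where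
  "besselI nu x = (\<Sum>k. (x / 2) powr (2 * real k + nu) / (fact k * Gamma (real k + nu + 1)))"

definition Psi :: "real \<Rightarrow> real" where
  "Psi x = besselI 1 x / besselI 0 x"

definition lam :: "real \<Rightarrow> real" where
  "lam x = ln (1 - (2 / x) * Psi x) / ln (Psi x)"

end

theory Submission
  imports Defs "HOL-Real_Asymp.Real_Asymp"
begin

text \<open>With \<open>s = x\<^sup>2/4\<close> the Bessel functions become entire power series and \<open>\<Psi>\<close> solves the
  Riccati equation \<open>\<Psi>' = 1 - \<Psi>/x - \<Psi>\<^sup>2\<close>. Since \<open>0 < \<Psi> < 1\<close>, the bounds \<open>2 < \<lambda> < 4\<close>
  amount to \<open>\<Psi>\<^sup>4 < 1 - 2\<Psi>/x < \<Psi>\<^sup>2\<close>. Each is proved by a comparison argument: the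
  difference of the two sides is positive near \<open>0\<close> (read off from the series at \<open>s = 0\<close>) and,
  by the Riccati equation, strictly increasing wherever it vanishes, so it never vanishes. For the
  right-hand bound one compares \<open>\<Psi>\<close> with \<open>x / (1/2 + sqrt (x\<^sup>2 + 9/4))\<close>, a strict
  subsolution of the Riccati equation. These bounds force \<open>x (1 - \<Psi> x) \<longrightarrow> 1/2\<close> at infinity,
  whence \<open>\<lambda> \<longrightarrow> 4\<close>; near \<open>0\<close>, \<open>1 - 2\<Psi>/x \<sim> x\<^sup>2/8\<close> and \<open>\<Psi> \<sim> x/2\<close> give \<open>\<lambda> \<longrightarrow> 2\<close>.
  Finally \<open>K = x / (2 \<Psi> x)\<close>, \<open>r = \<Psi> x\<close> solves \<open>r = \<Psi> (2 K r)\<close> with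
  \<open>1 - 1/K = r powr \<lambda> x\<close>, so the limits show that no exponent beats \<open>1/2\<close> or \<open>1/4\<close>.\<close>

section \<open>Power series of the Bessel functions\<close>

definition I0_coeff :: "nat \<Rightarrow> real" where
  "I0_coeff n = 1 / (fact n)^2"

definition I1_coeff :: "nat \<Rightarrow> real" where
  "I1_coeff n = 1 / (fact n * fact (Suc n))"

definition I0_series :: "real \<Rightarrow> real" where
  "I0_series s = (\<Sum>n. I0_coeff n * s^n)"

definition I1_series :: "real \<Rightarrow> real" where
  "I1_series s = (\<Sum>n. I1_coeff n * s^n)"

lemma summable_powser_fact_bound:
  fixes c :: "nat \<Rightarrow> real"
  assumes "\<And>n. \<bar>c n\<bar> \<le> 1 / fact n"
  shows "summable (\<lambda>n. c n * y^n)"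
proof (rule summable_comparison_test[OF _ summable_exp[of "\<bar>y\<bar>"]])
  have "\<bar>c n\<bar> * \<bar>y\<bar>^n \<le> 1 / fact n * \<bar>y\<bar>^n" for n
    by (rule mult_right_mono[OF assms]) simp
  then show "\<exists>N. \<forall>n\<ge>N. norm (c n * y ^ n) \<le> inverse (fact n) * \<bar>y\<bar> ^ n"
    by (simp add: abs_mult power_abs divide_inverse)
qed

lemma inverse_fact_mult_le: "1 / (fact n * fact m) \<le> (1 / fact m :: real)"
  by (simp add: divide_simps)

lemma summable_I0_series: "summable (\<lambda>n. I0_coeff n * s^n)"
  by (rule summable_powser_fact_bound)
     (use inverse_fact_mult_le in \<open>simp add: I0_coeff_def power2_eq_square\<close>)

lemma I1_coeff_le: "\<bar>I1_coeff n\<bar> \<le> 1 / fact n"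
  using inverse_fact_mult_le[of "Suc n" n] by (simp add: I1_coeff_def mult.commute del: fact_Suc)

lemma summable_I1_series: "summable (\<lambda>n. I1_coeff n * s^n)"
  by (rule summable_powser_fact_bound[OF I1_coeff_le])

lemma diffs_I0_coeff: "diffs I0_coeff = I1_coeff"
  by (rule ext) (simp add: diffs_def I0_coeff_def I1_coeff_def power2_eq_square field_simps del: fact_Suc,
      simp add: algebra_simps)

lemma DERIV_I0_series: "(I0_series has_real_derivative I1_series s) (at s)"
  using termdiffs_strong_converges_everywhere[OF summable_I0_series]
  unfolding I0_series_def I1_series_def diffs_I0_coeff .

lemma DERIV_I1_series_0: "(I1_series has_real_derivative 1/2) (at 0)"
  using termdiffs_strong_converges_everywhere[OF summable_I1_series, of 0]
  unfolding I1_series_def[abs_def] powser_zero by (simp add: diffs_def I1_coeff_def)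

lemma DERIV_mult_I1_series: "((\<lambda>s. s * I1_series s) has_real_derivative I0_series s) (at s)"
proof -
  define c where "c n = (case n of 0 \<Rightarrow> 0 | Suc m \<Rightarrow> I1_coeff m)" for n
  have "\<bar>c n\<bar> \<le> 1 / fact n" for n
  proof (cases n)
    case (Suc m)
    then show ?thesis using inverse_fact_mult_le[of m n] by (simp add: c_def I1_coeff_def)
  qed (simp add: c_def)
  then have summable: "summable (\<lambda>n. c n * s^n)" for s
    by (rule summable_powser_fact_bound)
  have "(\<lambda>n. c (Suc n) * s^Suc n) sums (s * I1_series s)" for s
    using sums_mult[OF summable_sums[OF summable_I1_series], of s]
    by (simp add: c_def I1_series_def mult_ac)
  then have "(\<lambda>n. c n * s^n) sums (s * I1_series s)" for s
    by (subst (asm) sums_Suc_iff) (simp add: c_def)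
  then have series: "s * I1_series s = (\<Sum>n. c n * s^n)" for s
    by (rule sums_unique)
  have "diffs c = I0_coeff"
    by (rule ext) (simp add: diffs_def c_def I0_coeff_def I1_coeff_def power2_eq_square field_simps del: fact_Suc,
      simp add: algebra_simps)
  then show ?thesis
    using termdiffs_strong_converges_everywhere[OF summable]
    unfolding series I0_series_def by simp
qed

lemma I0_series_0: "I0_series 0 = 1"
  unfolding I0_series_def powser_zero by (simp add: I0_coeff_def)

lemma I1_series_0: "I1_series 0 = 1"
  unfolding I1_series_def powser_zero by (simp add: I1_coeff_def)

lemma I0_series_ge_1: "s \<ge> 0 \<Longrightarrow> I0_series s \<ge> 1"
  using sum_le_suminf[OF summable_I0_series, of "{0}" s]
  by (simp add: I0_series_def I0_coeff_def)

lemma I1_series_ge_1: "s \<ge> 0 \<Longrightarrow> I1_series s \<ge> 1"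
  using sum_le_suminf[OF summable_I1_series, of "{0}" s]
  by (simp add: I1_series_def I1_coeff_def)

lemma besselI_0_eq:
  assumes "x > 0"
  shows "besselI 0 x = I0_series (x^2/4)"
proof -
  have "(x/2) powr (2 * real k + 0) / (fact k * Gamma (real k + 0 + 1)) = I0_coeff k * (x^2/4)^k" for k
  proof -
    have "(x/2) powr (2 * real k + 0) = (x/2)^(2*k)"
      using assms by (simp add: powr_realpow[symmetric])
    also have "\<dots> = (x^2/4)^k" by (simp add: power_mult power_divide)
    finally have "(x/2) powr (2 * real k + 0) = (x^2/4)^k" .
    then show ?thesis
      using Gamma_fact[of k, where 'a=real] by (simp add: I0_coeff_def add.commute power2_eq_square)
  qed
  then show ?thesis unfolding besselI_def I0_series_def by simp
qed

lemma besselI_1_eq: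
  assumes "x > 0"
  shows "besselI 1 x = x/2 * I1_series (x^2/4)"
proof -
  have "(x/2) powr (2 * real k + 1) / (fact k * Gamma (real k + 1 + 1)) = x/2 * (I1_coeff k * (x^2/4)^k)" for k
  proof -
    have "2 * real k + 1 = real (2*k+1)" by simp
    then have "(x/2) powr (2 * real k + 1) = (x/2)^(2*k+1)"
      using assms by (simp only: powr_realpow)
    also have "\<dots> = x/2 * (x^2/4)^k" by (simp add: power_mult power_divide)
    finally have power: "(x/2) powr (2 * real k + 1) = x/2 * (x^2/4)^k" .
    have Gamma: "Gamma (real k + 1 + 1) = fact (Suc k)"
      using Gamma_fact[of "Suc k", where 'a=real] by (simp add: add.commute)
    show ?thesis unfolding power Gamma by (simp add: I1_coeff_def)
  qed
  then have "besselI 1 x = (\<Sum>k. x/2 * (I1_coeff k * (x^2/4)^k))"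
    unfolding besselI_def by (simp only:)
  then show ?thesis
    unfolding I1_series_def by (simp only: suminf_mult[OF summable_I1_series])
qed

section \<open>The Riccati equation for \<open>\<Psi>\<close>\<close>

definition I_ratio :: "real \<Rightarrow> real" where
  "I_ratio s = I1_series s / I0_series s"

lemma Psi_eq_I_ratio: "x > 0 \<Longrightarrow> Psi x = x/2 * I_ratio (x^2/4)"
  by (simp add: Psi_def I_ratio_def besselI_0_eq besselI_1_eq)

lemma Psi_pos: "x > 0 \<Longrightarrow> Psi x > 0"
  using I0_series_ge_1[of "x^2/4"] I1_series_ge_1[of "x^2/4"]
  by (simp add: Psi_eq_I_ratio I_ratio_def)

lemma I_ratio_0: "I_ratio 0 = 1"
  by (simp add: I_ratio_def I0_series_0 I1_series_0)

lemma DERIV_I_ratio_0: "(I_ratio has_real_derivative -1/2) (at 0)"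
proof -
  have "(I_ratio has_real_derivative (1/2 * I0_series 0 - I1_series 0 * I1_series 0) / (I0_series 0 * I0_series 0)) (at 0)"
    unfolding I_ratio_def[abs_def]
    by (rule DERIV_divide[OF DERIV_I1_series_0 DERIV_I0_series]) (simp add: I0_series_0)
  then show ?thesis by (simp add: I0_series_0 I1_series_0)
qed

text \<open>Writing \<open>\<Psi> = 2 C / (x A)\<close> as below, only the derivatives of \<open>I0_series\<close> and of
  \<open>\<lambda>s. s * I1_series s\<close> are needed, and these are \<open>I1_series\<close> and \<open>I0_series\<close> again.\<close>
lemma DERIV_Psi:
  assumes "x > 0"
  shows "(Psi has_real_derivative 1 - Psi x / x - (Psi x)^2) (at x)"
proof -
  define A where "A y = I0_series (y^2/4)" for y
  define C where "C y = y^2/4 * I1_series (y^2/4)" for y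
  have dA: "(A has_real_derivative I1_series (x^2/4) * (x/2)) (at x)"
    unfolding A_def[abs_def] by (rule DERIV_chain2[OF DERIV_I0_series]) (auto intro!: derivative_eq_intros)
  have dC: "(C has_real_derivative A x * (x/2)) (at x)"
    unfolding C_def[abs_def] A_def by (rule DERIV_chain2[OF DERIV_mult_I1_series]) (auto intro!: derivative_eq_intros)
  have A1: "A x \<ge> 1" unfolding A_def by (rule I0_series_ge_1) simp
  have dD: "((\<lambda>y. y * A y) has_real_derivative 1 * A x + I1_series (x^2/4) * (x/2) * x) (at x)"
    by (rule DERIV_mult[OF DERIV_ident dA])
  have deriv: "((\<lambda>y. 2 * C y / (y * A y)) has_real_derivative
      (2 * (A x * (x/2)) * (x * A x) - 2 * C x * (1 * A x + I1_series (x^2/4) * (x/2) * x)) / (x * A x * (x * A x))) (at x)"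
    by (rule DERIV_divide[OF DERIV_cmult[OF dC] dD]) (use A1 assms in simp)
  have Psi_repr: "2 * C y / (y * A y) = Psi y" if "y > 0" for y
    using that by (simp add: Psi_eq_I_ratio I_ratio_def A_def C_def power2_eq_square)
  have "(2 * (A x * (x/2)) * (x * A x) - 2 * C x * (1 * A x + I1_series (x^2/4) * (x/2) * x)) / (x * A x * (x * A x))
      = 1 - Psi x / x - (Psi x)^2"
    unfolding Psi_repr[OF assms, symmetric] C_def using assms A1 by (simp add: field_simps power2_eq_square)
  then show ?thesis
    using has_field_derivative_transform_within_open[OF deriv _ _ Psi_repr, of "{0<..}"] assms by simp
qed

lemma continuous_on_Psi: "continuous_on {0<..} Psi"
  by (rule DERIV_continuous_on[of _ _ "\<lambda>x. 1 - Psi x / x - (Psi x)^2"])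
     (use DERIV_Psi in \<open>auto intro: has_field_derivative_at_within\<close>)

section \<open>A comparison principle\<close>

lemma positive_if_increasing_at_zeros:
  fixes f :: "real \<Rightarrow> real"
  assumes cont: "continuous_on {a<..} f"
    and up: "\<And>t. a < t \<Longrightarrow> f t = 0 \<Longrightarrow> \<exists>d>0. (f has_real_derivative d) (at t)"
    and near: "eventually (\<lambda>t. f t > 0) (at_right a)"
    and "a < x"
  shows "f x > 0"
proof (rule ccontr)
  assume "\<not> f x > 0"
  \<comment> \<open>\<open>f\<close> has a least zero \<open>m\<close> in \<open>[e, x]\<close>; it is negative just left of \<open>m\<close>, so by the
    intermediate value theorem there is a smaller zero\<close>
  obtain b where b: "b > a" "\<And>t. a < t \<Longrightarrow> t < b \<Longrightarrow> f t > 0"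
    using near by (auto simp: eventually_at_right_field)
  define e where "e = a + min (b - a) (x - a) / 2"
  have "a < e" "e < x" "e < b"
    using b(1) \<open>a < x\<close> by (auto simp: e_def min_def field_simps)
  with b(2) have e: "a < e" "e < x" "f e > 0" by auto
  have cont_e: "continuous_on {e..y} f" for y
    by (rule continuous_on_subset[OF cont]) (use e in auto)
  define Z where "Z = {t \<in> {e..x}. f t = 0}"
  have "Z \<noteq> {}"
    using IVT2'[of f x 0 e] \<open>\<not> f x > 0\<close> e cont_e by (auto simp: Z_def)
  moreover have "bdd_below Z" by (auto simp: Z_def intro: bdd_belowI[of _ e])
  moreover have "closed Z"
    unfolding Z_def by (rule continuous_closed_preimage_constant[OF cont_e]) simp
  ultimately have "Inf Z \<in> Z" and Inf_le: "\<And>t. t \<in> Z \<Longrightarrow> Inf Z \<le> t"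
    by (simp_all add: closed_contains_Inf cInf_lower)
  define m where "m = Inf Z"
  have "f m = 0" "e \<le> m" "m \<le> x"
    using \<open>Inf Z \<in> Z\<close> by (auto simp: m_def Z_def)
  with e(3) have m: "f m = 0" "e < m" "m \<le> x"
    by (auto simp: order.order_iff_strict)
  have "a < m" using e(1) m(2) by linarith
  then obtain d where d: "(f has_real_derivative d) (at m)" "d > 0"
    using up m(1) by blast
  from DERIV_pos_inc_left[OF d] m(1) obtain dh
    where dh: "dh > 0" "\<And>h. h > 0 \<Longrightarrow> h < dh \<Longrightarrow> f (m - h) < 0"
    by auto
  define h where "h = min dh (m - e) / 2"
  have h: "0 < h" "h < dh" "e < m - h"
    using dh(1) m(2) by (auto simp: h_def min_def field_simps)
  have "f (m - h) \<le> 0" using dh(2)[OF h(1,2)] by simp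
  then obtain t where t: "e \<le> t" "t \<le> m - h" "f t = 0"
    using IVT2'[of f "m - h" 0 e, OF _ _ _ cont_e] e(3) h(3) by auto
  then have "t \<in> Z" using m(3) h(1) by (auto simp: Z_def)
  then have "m \<le> t" unfolding m_def by (rule Inf_le)
  with t(2) h(1) show False by linarith
qed

lemma eventually_pos_at_right_of_DERIV:
  fixes G :: "real \<Rightarrow> real"
  assumes "(G has_real_derivative l) (at 0)" "l > 0" "G 0 = 0"
  shows "eventually (\<lambda>s. G s > 0) (at_right 0)"
proof -
  obtain d where "d > 0" "\<And>h. h > 0 \<Longrightarrow> h < d \<Longrightarrow> G 0 < G (0 + h)"
    using DERIV_pos_inc_right[OF assms(1,2)] by auto
  then show ?thesis
    using assms(3) by (auto simp: eventually_at_right_field)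
qed

lemma filterlim_quarter_square_at_right_0:
  "filterlim (\<lambda>x::real. x^2/4) (at_right 0) (at_right 0)"
  by real_asymp

section \<open>The bounds \<open>\<Psi>\<^sup>4 < 1 - 2\<Psi>/x < \<Psi>\<^sup>2\<close>\<close>

definition Psi_lower :: "real \<Rightarrow> real" where
  "Psi_lower x = x / (1/2 + sqrt (x^2 + 9/4))"

lemma sqrt_nine_quarters: "sqrt (9/4) = (3/2 :: real)"
  by (rule real_sqrt_unique) (simp_all add: power2_eq_square)

lemma sqrt_sq_plus_nine_quarters_ge: "sqrt (x^2 + 9/4) \<ge> 3/2"
  using real_sqrt_le_mono[of "9/4" "x^2 + 9/4"] by (simp add: sqrt_nine_quarters)

lemma sqrt_sq_plus_nine_quarters_gt: "x \<noteq> 0 \<Longrightarrow> sqrt (x^2 + 9/4) > 3/2"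
  using real_sqrt_less_mono[of "9/4" "x^2 + 9/4"] by (simp add: sqrt_nine_quarters)

lemma Psi_lower_pos: "x > 0 \<Longrightarrow> Psi_lower x > 0"
  using sqrt_sq_plus_nine_quarters_ge[of x] by (simp add: Psi_lower_def)

lemma continuous_on_Psi_lower: "continuous_on A Psi_lower"
proof -
  have "1/2 + sqrt (x^2 + 9/4) \<noteq> 0" for x :: real
    using sqrt_sq_plus_nine_quarters_ge[of x] by linarith
  then show ?thesis unfolding Psi_lower_def[abs_def] by (intro continuous_intros) auto
qed

lemma Psi_lower_sq_gt:
  assumes "x > 0"
  shows "1 - 2 * Psi_lower x / x < (Psi_lower x)^2"
proof -
  define s where "s = sqrt (x^2 + 9/4)"
  have s: "s^2 = x^2 + 9/4" "s > 3/2"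
    using sqrt_sq_plus_nine_quarters_gt[of x] assms by (simp_all add: s_def add_nonneg_pos)
  define u where "u = 1/2 + s"
  have u: "u > 0" "u^2 - u - x^2 = 2"
    using s unfolding u_def by (simp_all add: power2_eq_square algebra_simps)
  have g: "Psi_lower x = x / u" by (simp add: Psi_lower_def s_def u_def)
  have "(Psi_lower x)^2 + 2 * Psi_lower x / x - 1 = (x^2 + 2 * u - u^2) / u^2"
    unfolding g using assms u(1) by (simp add: field_simps power2_eq_square)
  also have "\<dots> = (s - 3/2) / u^2"
    using u(2) by (simp add: u_def)
  also have "\<dots> > 0" using s(2) u(1) by simp
  finally show ?thesis by simp
qed

lemma Psi_lower_strict_subsolution:
  assumes "x > 0"
  obtains d where "(Psi_lower has_real_derivative d) (at x)" "d < 1 - Psi_lower x / x - (Psi_lower x)^2"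
proof
  define s where "s = sqrt (x^2 + 9/4)"
  have s: "s^2 = x^2 + 9/4" "s > 3/2"
    using sqrt_sq_plus_nine_quarters_gt[of x] assms by (simp_all add: s_def add_nonneg_pos)
  define u where "u = 1/2 + s"
  have u: "u > 0" "u^2 - u - x^2 = 2"
    using s unfolding u_def by (simp_all add: power2_eq_square algebra_simps)
  have g: "Psi_lower x = x / u" by (simp add: Psi_lower_def s_def u_def)
  have "(Psi_lower has_real_derivative (u - x * (inverse s * x)) / (u * u)) (at x)"
    unfolding Psi_lower_def[abs_def] using u(1)
    by (auto intro!: derivative_eq_intros simp: s_def[symmetric] u_def[symmetric])
       (use zero_le_power2[of x] in linarith)+
  moreover have "(u - x * (inverse s * x)) / (u * u) = (s/2 + 9/4) / (s * u^2)"
  proof -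
    have "u - x * (inverse s * x) = (s/2 + s^2 - x^2) / s"
      using s(2) by (simp add: u_def field_simps power2_eq_square)
    also have "\<dots> = (s/2 + 9/4) / s"
      using s(1) by simp
    finally show ?thesis by (simp add: power2_eq_square)
  qed
  ultimately show "(Psi_lower has_real_derivative (s/2 + 9/4) / (s * u^2)) (at x)" by simp
  have "(s/2 + 9/4) / (s * u^2) < 2 / u^2"
    using s(2) u(1) by (simp add: field_simps)
  also have "2 / u^2 = (u^2 - u - x^2) / u^2"
    using u(2) by simp
  also have "\<dots> = 1 - Psi_lower x / x - (Psi_lower x)^2"
    unfolding g using assms u(1) by (simp add: field_simps power2_eq_square)
  finally show "(s/2 + 9/4) / (s * u^2) < 1 - Psi_lower x / x - (Psi_lower x)^2" .
qed

lemma Psi_gt_Psi_lower: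
  assumes "x > 0"
  shows "Psi_lower x < Psi x"
proof -
  define R where "R s = I_ratio s - 2 / (1/2 + sqrt (4 * s + 9/4))" for s
  have "((\<lambda>s. 2 / (1/2 + sqrt (4 * s + 9/4))) has_real_derivative -2/3) (at 0)"
    by (auto intro!: derivative_eq_intros simp: sqrt_nine_quarters)
  from DERIV_diff[OF DERIV_I_ratio_0 this] have "(R has_real_derivative 1/6) (at 0)"
    by (simp add: R_def[abs_def])
  moreover have "R 0 = 0" by (simp add: R_def I_ratio_0 sqrt_nine_quarters)
  ultimately have "eventually (\<lambda>s. R s > 0) (at_right 0)"
    by (intro eventually_pos_at_right_of_DERIV) auto
  then have near: "eventually (\<lambda>y. R (y^2/4) > 0) (at_right 0)"
    by (rule eventually_compose_filterlim[OF _ filterlim_quarter_square_at_right_0])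
  have diff: "Psi y - Psi_lower y = y/2 * R (y^2/4)" if "y > 0" for y
    using that by (simp add: Psi_eq_I_ratio Psi_lower_def R_def right_diff_distrib)
  have "Psi x - Psi_lower x > 0"
  proof (rule positive_if_increasing_at_zeros[where a=0 and f="\<lambda>y. Psi y - Psi_lower y"])
    show "continuous_on {0<..} (\<lambda>y. Psi y - Psi_lower y)"
      by (intro continuous_on_diff continuous_on_Psi continuous_on_Psi_lower)
    show "\<exists>d>0. ((\<lambda>y. Psi y - Psi_lower y) has_real_derivative d) (at t)"
      if t: "0 < t" and zero: "Psi t - Psi_lower t = 0" for t
    proof -
      obtain d where d: "(Psi_lower has_real_derivative d) (at t)"
        and d_lt: "d < 1 - Psi_lower t / t - (Psi_lower t)^2"
        using Psi_lower_strict_subsolution[OF t] by blast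
      have "(1 - Psi t / t - (Psi t)^2) - d > 0" using zero d_lt by simp
      with DERIV_diff[OF DERIV_Psi[OF t] d] show ?thesis by (intro exI conjI)
    qed
    show "eventually (\<lambda>y. Psi y - Psi_lower y > 0) (at_right 0)"
      using near eventually_at_right_less[of 0] by eventually_elim (simp add: diff)
  qed (fact assms)
  then show ?thesis by simp
qed

text \<open>With \<open>p = \<Psi> x\<close> this is the derivative of \<open>1 - 2\<Psi>/x - \<Psi>\<^sup>4\<close> at one of its zeros, where
  \<open>1/x = (1 - p\<^sup>4) / (2p)\<close>; it equals \<open>p (1 - p\<^sup>2)\<^sup>3\<close>.\<close>
lemma quartic_Riccati_gap:
  fixes p x :: real
  assumes "p > 0" "x > 0" "p^4 = 1 - 2 * p / x"
  shows "2 * p / x^2 - (2 / x + 4 * p^3) * (1 - p / x - p^2) > 0"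
proof -
  have "p^4 < 1" using assms by simp
  then have "p < 1" using assms(1) by (simp add: power_less_one_iff)
  have inv_x: "1 / x = (1 - p^4) / (2 * p)" using assms by (simp add: field_simps)
  have "2 * p / x^2 - (2 / x + 4 * p^3) * (1 - p / x - p^2)
      = 2 * p * (1/x)^2 - (2 * (1/x) + 4 * p^3) * (1 - p * (1/x) - p^2)"
    by (simp add: power2_eq_square)
  also have "\<dots> = p * (1 - p^2)^3"
    unfolding inv_x using assms(1) by (simp add: field_simps) algebra
  finally show ?thesis using assms(1) \<open>p < 1\<close> by (simp add: power_less_one_iff)
qed

lemma DERIV_quartic_gap:
  assumes t: "t > 0"
  shows "((\<lambda>y. 1 - 2 * Psi y / y - (Psi y)^4) has_real_derivative
    2 * Psi t / t^2 - (2 / t + 4 * (Psi t)^3) * (1 - Psi t / t - (Psi t)^2)) (at t)"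
proof -
  define R where "R = 1 - Psi t / t - (Psi t)^2"
  note dPsi = DERIV_Psi[OF t, folded R_def]
  have "((\<lambda>y. 2 * Psi y / y) has_real_derivative (2 * R * t - 2 * Psi t * 1) / (t * t)) (at t)"
    by (rule DERIV_divide[OF DERIV_cmult[OF dPsi] DERIV_ident]) (use t in simp)
  moreover have "((\<lambda>y. (Psi y)^4) has_real_derivative of_nat 4 * (R * (Psi t)^(4 - Suc 0))) (at t)"
    by (rule DERIV_power[OF dPsi])
  ultimately have "((\<lambda>y. 1 - 2 * Psi y / y - (Psi y)^4) has_real_derivative
      0 - (2 * R * t - 2 * Psi t * 1) / (t * t) - of_nat 4 * (R * (Psi t)^(4 - Suc 0))) (at t)"
    by (intro DERIV_diff DERIV_const)
  moreover have "0 - (2 * R * t - 2 * Psi t * 1) / (t * t) - of_nat 4 * (R * (Psi t)^(4 - Suc 0))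
      = 2 * Psi t / t^2 - (2 / t + 4 * (Psi t)^3) * R"
    using t by (simp add: diff_divide_distrib power2_eq_square algebra_simps)
  ultimately show ?thesis by (simp add: R_def)
qed

lemma Psi_pow4_lt:
  assumes "x > 0"
  shows "(Psi x)^4 < 1 - 2 * Psi x / x"
proof -
  define T where "T s = 1 - I_ratio s - s^2 * (I_ratio s)^4" for s
  have "(T has_real_derivative 1/2) (at 0)"
    unfolding T_def[abs_def] by (auto intro!: derivative_eq_intros DERIV_I_ratio_0)
  moreover have "T 0 = 0" by (simp add: T_def I_ratio_0)
  ultimately have "eventually (\<lambda>s. T s > 0) (at_right 0)"
    by (intro eventually_pos_at_right_of_DERIV) auto
  then have near: "eventually (\<lambda>y. T (y^2/4) > 0) (at_right 0)"
    by (rule eventually_compose_filterlim[OF _ filterlim_quarter_square_at_right_0])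
  have gap: "1 - 2 * Psi y / y - (Psi y)^4 = T (y^2/4)" if "y > 0" for y
    using that by (simp add: Psi_eq_I_ratio T_def power_mult_distrib power_divide flip: power_mult)
  have "1 - 2 * Psi x / x - (Psi x)^4 > 0"
  proof (rule positive_if_increasing_at_zeros[where a=0 and f="\<lambda>y. 1 - 2 * Psi y / y - (Psi y)^4"])
    show "continuous_on {0<..} (\<lambda>y. 1 - 2 * Psi y / y - (Psi y)^4)"
      by (intro continuous_intros continuous_on_Psi) auto
    show "\<exists>d>0. ((\<lambda>y. 1 - 2 * Psi y / y - (Psi y)^4) has_real_derivative d) (at t)"
      if t: "0 < t" and zero: "1 - 2 * Psi t / t - (Psi t)^4 = 0" for t
    proof -
      have "2 * Psi t / t^2 - (2 / t + 4 * (Psi t)^3) * (1 - Psi t / t - (Psi t)^2) > 0"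
        using quartic_Riccati_gap[OF Psi_pos[OF t] t] zero by simp
      with DERIV_quartic_gap[OF t] show ?thesis by (intro exI conjI)
    qed
    show "eventually (\<lambda>y. 1 - 2 * Psi y / y - (Psi y)^4 > 0) (at_right 0)"
      using near eventually_at_right_less[of 0] by eventually_elim (simp add: gap)
  qed (fact assms)
  then show ?thesis by simp
qed

lemma Psi_bounds:
  assumes "x > 0"
  shows "0 < Psi x" "Psi x < 1" "(Psi x)^4 < 1 - 2 * Psi x / x" "1 - 2 * Psi x / x < (Psi x)^2"
    and "0 < 1 - 2 * Psi x / x"
proof -
  show pos: "0 < Psi x" using Psi_pos[OF assms] .
  show quartic: "(Psi x)^4 < 1 - 2 * Psi x / x" using Psi_pow4_lt[OF assms] .
  moreover have "0 < (Psi x)^4" "0 < 2 * Psi x / x" using pos assms by simp_all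
  ultimately show "0 < 1 - 2 * Psi x / x" by linarith
  from \<open>0 < 2 * Psi x / x\<close> quartic have "(Psi x)^4 < 1" by linarith
  then show "Psi x < 1" using pos by (simp add: power_less_one_iff)
  have lower: "0 < Psi_lower x" "Psi_lower x < Psi x"
    using Psi_lower_pos[OF assms] Psi_gt_Psi_lower[OF assms] by auto
  have "(Psi_lower x)^2 < (Psi x)^2"
    using lower by (intro power_strict_mono) auto
  moreover have "2 * Psi_lower x / x < 2 * Psi x / x"
    using lower assms by (intro divide_strict_right_mono) auto
  ultimately show "1 - 2 * Psi x / x < (Psi x)^2" using Psi_lower_sq_gt[OF assms] by linarith
qed

lemma lam_bounds:
  assumes "x > 0"
  shows "2 < lam x" "lam x < 4"
proof -
  note b = Psi_bounds[OF assms]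
  have "ln ((Psi x)^4) < ln (1 - 2 * Psi x / x)" "ln (1 - 2 * Psi x / x) < ln ((Psi x)^2)"
    using b by simp_all
  then have "4 * ln (Psi x) < ln (1 - 2 * Psi x / x)" "ln (1 - 2 * Psi x / x) < 2 * ln (Psi x)"
    using b(1) by (simp_all add: ln_realpow)
  moreover have "ln (Psi x) < 0" using b by simp
  ultimately show "2 < lam x" "lam x < 4"
    by (simp_all add: lam_def neg_less_divide_eq neg_divide_less_eq)
qed

section \<open>The limits of \<open>\<lambda>\<close>\<close>

lemma tendsto_affine_ratio_at_bot:
  fixes L u v :: "'a \<Rightarrow> real"
  assumes L: "filterlim L at_bot F" and u: "(u \<longlongrightarrow> a) F" and v: "(v \<longlongrightarrow> b) F"
  shows "((\<lambda>x. (c * L x + u x) / (L x + v x)) \<longlongrightarrow> c) F"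
proof -
  have den: "filterlim (\<lambda>x. L x + v x) at_bot F"
    using filterlim_tendsto_add_at_bot_iff[OF v, of L] L by (simp add: add.commute)
  have "((\<lambda>x. c + (u x - c * v x) / (L x + v x)) \<longlongrightarrow> c + 0) F"
    by (intro tendsto_add tendsto_const tendsto_divide_0[OF tendsto_diff[OF u tendsto_mult[OF tendsto_const v]]]
        filterlim_mono[OF den at_bot_le_at_infinity order_refl])
  moreover have "eventually (\<lambda>x. c + (u x - c * v x) / (L x + v x) = (c * L x + u x) / (L x + v x)) F"
    using filterlim_at_bot_dense[THEN iffD1, OF den, rule_format, of 0]
    by eventually_elim (simp add: field_simps)
  ultimately show ?thesis by (simp add: tendsto_cong)
qed

lemma tendsto_mult_ln:
  fixes f g :: "'a \<Rightarrow> real"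
  assumes f: "(f \<longlongrightarrow> 1) F" and g: "((\<lambda>x. g x * (1 - f x)) \<longlongrightarrow> c) F"
    and pos: "eventually (\<lambda>x. f x > 0 \<and> g x \<ge> 0) F"
  shows "((\<lambda>x. g x * ln (f x)) \<longlongrightarrow> -c) F"
proof (rule tendsto_sandwich)
  show "eventually (\<lambda>x. - (g x * (1 - f x)) / f x \<le> g x * ln (f x)) F"
    using pos
  proof eventually_elim
    case (elim x)
    have "1 - 1 / f x \<le> ln (f x)"
      using ln_le_minus_one[of "1 / f x"] elim by (simp add: ln_div)
    then have "g x * (1 - 1 / f x) \<le> g x * ln (f x)" using elim by (simp add: mult_left_mono)
    then show ?case using elim by (simp add: field_simps)
  qed
  show "eventually (\<lambda>x. g x * ln (f x) \<le> - (g x * (1 - f x))) F"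
    using pos
  proof eventually_elim
    case (elim x)
    then have "g x * ln (f x) \<le> g x * (f x - 1)" by (simp add: mult_left_mono ln_le_minus_one)
    then show ?case by (simp add: algebra_simps)
  qed
  show "((\<lambda>x. - (g x * (1 - f x)) / f x) \<longlongrightarrow> -c) F"
    using tendsto_divide[OF tendsto_minus[OF g] f] by simp
  show "((\<lambda>x. - (g x * (1 - f x))) \<longlongrightarrow> -c) F"
    using tendsto_minus[OF g] .
qed

lemma tendsto_I_ratio_at_right_0: "((\<lambda>x. I_ratio (x^2/4)) \<longlongrightarrow> 1) (at_right 0)"
proof -
  have "((\<lambda>x. x^2/4) \<longlongrightarrow> 0) (at_right (0::real))" by real_asymp
  from isCont_tendsto_compose[OF DERIV_isCont[OF DERIV_I_ratio_0] this] show ?thesis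
    by (simp add: I_ratio_0)
qed

lemma tendsto_one_minus_I_ratio_at_right_0:
  "((\<lambda>x. (1 - I_ratio (x^2/4)) / (x^2/4)) \<longlongrightarrow> 1/2) (at_right 0)"
proof -
  have "((\<lambda>s. (I_ratio s - I_ratio 0) / (s - 0)) \<longlongrightarrow> -1/2) (at 0)"
    using DERIV_I_ratio_0 by (simp add: has_field_derivative_iff)
  from tendsto_minus[OF filterlim_compose[OF this
      filterlim_mono[OF filterlim_quarter_square_at_right_0 at_within_le_at order_refl]]]
  have "((\<lambda>x. - ((I_ratio (x^2/4) - I_ratio 0) / (x^2/4 - 0))) \<longlongrightarrow> 1/2) (at_right 0)"
    by simp
  moreover have "(\<lambda>x. - ((I_ratio (x^2/4) - I_ratio 0) / (x^2/4 - 0))) = (\<lambda>x. (1 - I_ratio (x^2/4)) / (x^2/4))"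
    by (rule ext) (simp add: I_ratio_0 divide_simps)
  ultimately show ?thesis by simp
qed

lemma lam_tendsto_at_right_0: "(lam \<longlongrightarrow> 2) (at_right 0)"
proof -
  define q where "q x = I_ratio (x^2/4)" for x
  define M where "M x = (1 - q x) / (x^2/4)" for x
  have "((\<lambda>x. ln (M x)) \<longlongrightarrow> ln (1/2)) (at_right 0)"
    "((\<lambda>x. ln (q x)) \<longlongrightarrow> ln 1) (at_right 0)"
    unfolding M_def q_def
    by (intro tendsto_ln tendsto_one_minus_I_ratio_at_right_0 tendsto_I_ratio_at_right_0; simp)+
  moreover have "filterlim (\<lambda>x::real. ln (x/2)) at_bot (at_right 0)" by real_asymp
  ultimately have "((\<lambda>x. (2 * ln (x/2) + ln (M x)) / (ln (x/2) + ln (q x))) \<longlongrightarrow> 2) (at_right 0)"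
    by (intro tendsto_affine_ratio_at_bot)
  moreover have "eventually (\<lambda>x. (2 * ln (x/2) + ln (M x)) / (ln (x/2) + ln (q x)) = lam x) (at_right 0)"
    using eventually_at_right_less[of 0]
  proof eventually_elim
    case (elim x)
    note b = Psi_bounds[OF elim]
    have Psi: "Psi x = x/2 * q x" using Psi_eq_I_ratio[OF elim] by (simp add: q_def)
    have "1 - 2 * Psi x / x = (x/2)^2 * M x"
      using elim by (simp add: Psi M_def power_divide)
    with b(5) elim have "ln (1 - 2 * Psi x / x) = 2 * ln (x/2) + ln (M x)"
      by (simp add: ln_mult ln_realpow zero_less_mult_iff)
    moreover have "q x > 0" using b(1) elim by (simp add: Psi zero_less_mult_iff)
    then have "ln (Psi x) = ln (x/2) + ln (q x)"
      unfolding Psi using elim by (intro ln_mult_pos) simp_all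
    ultimately show ?case by (simp add: lam_def)
  qed
  ultimately show ?thesis by (rule tendsto_cong[THEN iffD1, rotated])
qed

lemma tendsto_Psi_at_top: "(Psi \<longlongrightarrow> 1) at_top"
proof (rule tendsto_sandwich[OF _ _ _ tendsto_const])
  show "(Psi_lower \<longlongrightarrow> 1) at_top" unfolding Psi_lower_def[abs_def] by real_asymp
  show "eventually (\<lambda>x. Psi_lower x \<le> Psi x) at_top"
    using eventually_gt_at_top[of 0] by eventually_elim (simp add: Psi_gt_Psi_lower less_imp_le)
  show "eventually (\<lambda>x. Psi x \<le> 1) at_top"
    using eventually_gt_at_top[of 0] by eventually_elim (simp add: Psi_bounds(2) less_imp_le)
qed

lemma tendsto_mult_one_minus_Psi_at_top: "((\<lambda>x. x * (1 - Psi x)) \<longlongrightarrow> 1/2) at_top"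
proof (rule tendsto_sandwich)
  show "((\<lambda>x. 2 * Psi x / ((1 + Psi x) * (1 + (Psi x)^2))) \<longlongrightarrow> 1/2) at_top"
    using tendsto_Psi_at_top by (auto intro!: tendsto_eq_intros)
  show "((\<lambda>x. x * (1 - Psi_lower x)) \<longlongrightarrow> 1/2) at_top"
    unfolding Psi_lower_def by real_asymp
  show "eventually (\<lambda>x. 2 * Psi x / ((1 + Psi x) * (1 + (Psi x)^2)) \<le> x * (1 - Psi x)) at_top"
    using eventually_gt_at_top[of 0]
  proof eventually_elim
    case (elim x)
    note b = Psi_bounds[OF elim]
    have "1 - (Psi x)^4 = (1 - Psi x) * ((1 + Psi x) * (1 + (Psi x)^2))"
      by (simp add: algebra_simps power2_eq_square power4_eq_xxxx)
    with b(3) elim have "2 * Psi x < x * ((1 - Psi x) * ((1 + Psi x) * (1 + (Psi x)^2)))"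
      by (simp add: field_simps)
    moreover have "(1 + Psi x) * (1 + (Psi x)^2) > 0" using b(1) by (simp add: add_pos_nonneg)
    ultimately show ?case by (simp add: divide_le_eq mult.assoc)
  qed
  show "eventually (\<lambda>x. x * (1 - Psi x) \<le> x * (1 - Psi_lower x)) at_top"
    using eventually_gt_at_top[of 0]
    by eventually_elim (simp add: Psi_gt_Psi_lower less_imp_le)
qed

lemma lam_tendsto_at_top: "(lam \<longlongrightarrow> 4) at_top"
proof -
  have pos: "eventually (\<lambda>x. 0 < x) (at_top :: real filter)" by (rule eventually_gt_at_top)
  have "((\<lambda>x. x * ln (Psi x)) \<longlongrightarrow> -(1/2)) at_top"
    using tendsto_Psi_at_top tendsto_mult_one_minus_Psi_at_top
  proof (rule tendsto_mult_ln)
    show "eventually (\<lambda>x. 0 < Psi x \<and> 0 \<le> x) at_top"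
      using pos by eventually_elim (simp add: Psi_pos)
  qed
  moreover have "((\<lambda>x. x * ln (1 - 2 * Psi x / x)) \<longlongrightarrow> -2) at_top"
  proof (rule tendsto_mult_ln)
    have "((\<lambda>x. 2 * Psi x * (1 / x)) \<longlongrightarrow> 2 * 1 * 0) at_top"
      by (intro tendsto_intros tendsto_Psi_at_top) real_asymp
    then show "((\<lambda>x. 1 - 2 * Psi x / x) \<longlongrightarrow> 1) at_top"
      using tendsto_diff[OF tendsto_const, of _ 0 at_top 1] by simp
    have "((\<lambda>x. 2 * Psi x) \<longlongrightarrow> 2) at_top"
      using tendsto_mult[OF tendsto_const tendsto_Psi_at_top, of 2] by simp
    moreover have "eventually (\<lambda>x. 2 * Psi x = x * (1 - (1 - 2 * Psi x / x))) at_top"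
      using pos by eventually_elim simp
    ultimately show "((\<lambda>x. x * (1 - (1 - 2 * Psi x / x))) \<longlongrightarrow> 2) at_top"
      by (rule tendsto_cong[THEN iffD1, rotated])
    show "eventually (\<lambda>x. 0 < 1 - 2 * Psi x / x \<and> 0 \<le> x) at_top"
      using pos by eventually_elim (intro conjI Psi_bounds(5) less_imp_le)
  qed
  ultimately have "((\<lambda>x. (x * ln (1 - 2 * Psi x / x)) / (x * ln (Psi x))) \<longlongrightarrow> -2 / -(1/2)) at_top"
    by (intro tendsto_divide) auto
  then have "((\<lambda>x. (x * ln (1 - 2 * Psi x / x)) / (x * ln (Psi x))) \<longlongrightarrow> 4) at_top"
    by simp
  moreover have "eventually (\<lambda>x. (x * ln (1 - 2 * Psi x / x)) / (x * ln (Psi x)) = lam x) at_top"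
    using pos by eventually_elim (simp add: lam_def)
  ultimately show ?thesis by (rule tendsto_cong[THEN iffD1, rotated])
qed

section \<open>Optimality of the exponents\<close>

lemma Psi_fixed_point:
  assumes "x > 0"
  obtains K r where "K > 1" "r > 0" "r < 1" "r = Psi (2 * K * r)"
    and "\<And>c. (1 - 1/K) powr c = r powr (lam x * c)"
proof
  note b = Psi_bounds[OF assms]
  define K where "K = x / (2 * Psi x)"
  show "K > 1" using b(1,5) assms by (simp add: K_def field_simps)
  show "Psi x > 0" "Psi x < 1" using b(1,2) .
  show "Psi x = Psi (2 * K * Psi x)" using b(1) by (simp add: K_def)
  have "lam x * ln (Psi x) = ln (1 - 2 * Psi x / x)"
    using b(1,2) by (simp add: lam_def)
  then have "1 - 1/K = Psi x powr lam x"
    using b(1,5) by (simp add: K_def powr_def mult.commute)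
  then show "(1 - 1/K) powr c = Psi x powr (lam x * c)" for c
    by (simp add: powr_powr)
qed

lemma exponent_half_optimal:
  assumes "a < 1/2"
  shows "\<exists>K r. K > 1 \<and> r > 0 \<and> r = Psi (2 * K * r) \<and> \<not> ((1 - 1/K) powr a < r)"
proof -
  have "((\<lambda>x. a * lam x) \<longlongrightarrow> a * 2) (at_right 0)"
    by (intro tendsto_mult tendsto_const lam_tendsto_at_right_0)
  then have "eventually (\<lambda>x. a * lam x < 1) (at_right 0)"
    using assms by (intro order_tendstoD) auto
  then have "eventually (\<lambda>x. 0 < x \<and> a * lam x < 1) (at_right 0)"
    using eventually_at_right_less[of 0] by eventually_elim simp
  then obtain x where x: "0 < x" "a * lam x < 1"
    using eventually_happens'[OF trivial_limit_at_right_real] by blast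
  obtain K r where "K > 1" "r > 0" "r < 1" "r = Psi (2 * K * r)"
    and "\<And>c. (1 - 1/K) powr c = r powr (lam x * c)"
    using Psi_fixed_point[OF x(1)] by blast
  moreover have "r powr 1 \<le> r powr (lam x * a)"
    using x(2) \<open>r > 0\<close> \<open>r < 1\<close> by (intro powr_mono') (simp_all add: mult.commute)
  ultimately show ?thesis by (intro exI[of _ K] exI[of _ r]) auto
qed

lemma exponent_quarter_optimal:
  assumes "b > 1/4"
  shows "\<exists>K r. K > 1 \<and> r > 0 \<and> r = Psi (2 * K * r) \<and> \<not> (r < (1 - 1/K) powr b)"
proof -
  have "((\<lambda>x. b * lam x) \<longlongrightarrow> b * 4) at_top"
    by (intro tendsto_mult tendsto_const lam_tendsto_at_top)
  then have "eventually (\<lambda>x. 1 < b * lam x) at_top"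
    using assms by (intro order_tendstoD) auto
  then have "eventually (\<lambda>x. 0 < x \<and> 1 < b * lam x) at_top"
    using eventually_gt_at_top[of 0] by eventually_elim simp
  then obtain x where x: "0 < x" "1 < b * lam x"
    using eventually_happens'[OF trivial_limit_at_top_linorder] by blast
  obtain K r where "K > 1" "r > 0" "r < 1" "r = Psi (2 * K * r)"
    and "\<And>c. (1 - 1/K) powr c = r powr (lam x * c)"
    using Psi_fixed_point[OF x(1)] by blast
  moreover have "r powr (lam x * b) \<le> r powr 1"
    using x(2) \<open>r > 0\<close> \<open>r < 1\<close> by (intro powr_mono') (simp_all add: mult.commute)
  ultimately show ?thesis by (intro exI[of _ K] exI[of _ r]) auto
qed

theorem mainTheorem2:
  shows "(\<forall>x>0. 2 < lam x \<and> lam x < 4)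
    \<and> (lam \<longlongrightarrow> 2) (at_right 0)
    \<and> (lam \<longlongrightarrow> 4) at_top
    \<and> (\<forall>a::real. a < 1/2 \<longrightarrow>
          (\<exists>K r. K > 1 \<and> r > 0 \<and> r = Psi (2 * K * r) \<and> \<not> ((1 - 1/K) powr a < r)))
    \<and> (\<forall>b::real. b > 1/4 \<longrightarrow>
          (\<exists>K r. K > 1 \<and> r > 0 \<and> r = Psi (2 * K * r) \<and> \<not> (r < (1 - 1/K) powr b)))"
  using lam_bounds lam_tendsto_at_right_0 lam_tendsto_at_top
    exponent_half_optimal exponent_quarter_optimal
  by blast

end
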